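(* Each of $P_3$, $P_4$ and $C_4$ is $T_1$-Tur\'an-good; that is, for each $H\in\{P_3,P_4,C_4\}$ there is $n_0$ such that $\mathrm{ex}(n,H,T_1)=\mathcal{N}(H,T_2(n))$ for all $n\ge n_0$.
   Context: $P_k$ is the path on $k$ vertices, $C_4$ the cycle on $4$ vertices, and $T_1$ (the paw) is the graph consisting of a triangle and one further vertex joined to exactly one vertex of the triangle. $T_2(n)$ is the complete bipartite graph on $n$ vertices with parts of sizes $\lfloor n/2\rfloor$ and $\lceil n/2\rceil$. For graphs $H,G$, $\mathcal{N}(H,G)$ is the number of subgraphs of $G$ isomorphic to $H$, and $\mathrm{ex}(n,H,F)$ is the maximum of $\mathcal{N}(H,G)$ over $F$-free graphs $G$ on $n$ vertices. *)

theory Defs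
  imports Main
begin

type_synonym 'a graph = "'a set \<times> 'a set set"

definition simple_graph :: "'a graph \<Rightarrow> bool" where
  "simple_graph G \<longleftrightarrow> finite (fst G) \<and>
     (\<forall>e\<in>snd G. \<exists>u v. u \<noteq> v \<and> u \<in> fst G \<and> v \<in> fst G \<and> e = {u, v})"

definition graph_iso :: "'a graph \<Rightarrow> 'b graph \<Rightarrow> bool" where
  "graph_iso G H \<longleftrightarrow> (\<exists>f. bij_betw f (fst G) (fst H) \<and>
     (\<forall>u\<in>fst G. \<forall>v\<in>fst G. {u, v} \<in> snd G \<longleftrightarrow> {f u, f v} \<in> snd H))"

definition subgraphs :: "'a graph \<Rightarrow> 'a graph set" where
  "subgraphs G = {(W, F). W \<subseteq> fst G \<and> F \<subseteq> snd G \<and> (\<forall>e\<in>F. e \<subseteq> W)}"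

definition count_copies :: "'b graph \<Rightarrow> 'a graph \<Rightarrow> nat" where
  "count_copies H G = card {S \<in> subgraphs G. graph_iso S H}"

definition free :: "'b graph \<Rightarrow> 'a graph \<Rightarrow> bool" where
  "free F G \<longleftrightarrow> (\<forall>S \<in> subgraphs G. \<not> graph_iso S F)"

text \<open>ex(n, H, F): max of N(H,G) over F-free simple graphs G on n vertices
 (vertex set {0..<n}; counts are isomorphism invariant).\<close>
definition ex :: "nat \<Rightarrow> 'b graph \<Rightarrow> 'c graph \<Rightarrow> nat" where
  "ex n H F = Max {count_copies H G | G :: nat graph.
       simple_graph G \<and> fst G = {0..<n} \<and> free F G}"

definition P3 :: "nat graph" where
  "P3 = ({0, 1, 2}, {{0, 1}, {1, 2}})"

definition P4 :: "nat graph" where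
  "P4 = ({0, 1, 2, 3}, {{0, 1}, {1, 2}, {2, 3}})"

definition C4 :: "nat graph" where
  "C4 = ({0, 1, 2, 3}, {{0, 1}, {1, 2}, {2, 3}, {3, 0}})"

definition T1 :: "nat graph" where
  "T1 = ({0, 1, 2, 3}, {{0, 1}, {1, 2}, {0, 2}, {2, 3}})"

definition T2 :: "nat \<Rightarrow> nat graph" where
  "T2 n = ({0..<n}, {{u, v} | u v. u < n div 2 \<and> n div 2 \<le> v \<and> v < n})"

end

theory Submission
  imports Defs "HOL-Library.FuncSet" "HOL-Analysis.Convex"
begin

text \<open>Let \<open>G\<close> be paw-free with \<open>n \<ge> 4\<close> vertices and \<open>e\<close> edges. Every edge \<open>uv\<close> satisfies
  \<open>d(u) + d(v) \<le> n\<close>: either the neighbourhoods of \<open>u\<close> and \<open>v\<close> are disjoint, or \<open>u\<close> and \<open>v\<close>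
  lie on a triangle, which no further edge may touch, so that \<open>d(u) = d(v) = 2\<close>. Summing over
  the edges gives \<open>\<Sum> d\<^sup>2 \<le> n e\<close>, hence \<open>e \<le> n\<^sup>2/4\<close> by Cauchy-Schwarz, and the number
  \<open>\<Sum> d(d - 1) = \<Sum> d\<^sup>2 - 2e\<close> of ordered \<open>P\<^sub>3\<close>s is at most \<open>(n - 2) e\<close>. An ordered \<open>P\<^sub>4\<close>
  \<open>x u v y\<close> is determined by the arc \<open>(u, v)\<close> and the choice of \<open>x\<close> and \<open>y\<close>, so there are at most
  \<open>2e \<lfloor>(n - 2)\<^sup>2/4\<rfloor>\<close> of them, and every ordered \<open>C\<^sub>4\<close> is an ordered \<open>P\<^sub>4\<close>. The graph
  \<open>T\<^sub>2(n)\<close> attains all these bounds, the \<open>P\<^sub>4\<close> bound already with its ordered \<open>C\<^sub>4\<close>s. Since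
  the ordered copies of \<open>H\<close> number \<open>|Aut H|\<close> times the copies, the same comparisons hold for
  \<open>N(H, -)\<close>.\<close>

lemma simple_graph_edge_cases:
  assumes "simple_graph G" "e \<in> snd G"
  obtains u v where "e = {u, v}" "u \<noteq> v" "u \<in> fst G" "v \<in> fst G"
  using assms unfolding simple_graph_def by blast

lemma simple_graph_edge_subset:
  assumes "simple_graph G" "e \<in> snd G"
  shows "e \<subseteq> fst G"
  using assms by (elim simple_graph_edge_cases) auto

lemma simple_graph_edgeD:
  assumes "simple_graph G" "{u, v} \<in> snd G"
  shows "u \<noteq> v" "u \<in> fst G" "v \<in> fst G"
proof -
  obtain p q where "{u, v} = {p, q}" "p \<noteq> q" "p \<in> fst G" "q \<in> fst G"
    using simple_graph_edge_cases[OF assms] by metis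
  then show "u \<noteq> v" "u \<in> fst G" "v \<in> fst G"
    by (auto simp: doubleton_eq_iff)
qed

lemma finite_edges: "simple_graph G \<Longrightarrow> finite (snd G)"
  by (rule finite_subset[of _ "Pow (fst G)"])
    (auto dest: simple_graph_edge_subset simp: simple_graph_def)

lemma simple_graphI:
  assumes "finite V" "\<forall>e\<in>E. \<exists>u\<in>V. \<exists>v\<in>V. u \<noteq> v \<and> e = {u, v}"
  shows "simple_graph (V, E)"
  using assms unfolding simple_graph_def by fastforce

lemma subgraphsI:
  assumes "W \<subseteq> fst G" "F \<subseteq> snd G" "\<And>e. e \<in> F \<Longrightarrow> e \<subseteq> W"
  shows "(W, F) \<in> subgraphs G"
  using assms unfolding subgraphs_def by blast

lemma simple_P3: "simple_graph P3"
  unfolding P3_def by (rule simple_graphI) auto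

lemma simple_P4: "simple_graph P4"
  unfolding P4_def by (rule simple_graphI) auto

lemma simple_C4: "simple_graph C4"
  unfolding C4_def by (rule simple_graphI) auto

lemma simple_T1: "simple_graph T1"
  unfolding T1_def by (rule simple_graphI) auto

section \<open>Embeddings and copies\<close>

text \<open>Embeddings are taken extensional, so that each is determined by its values on the
  vertices of the embedded graph.\<close>

definition embeddings :: "'b graph \<Rightarrow> 'a graph \<Rightarrow> ('b \<Rightarrow> 'a) set" where
  "embeddings H G =
     {f \<in> fst H \<rightarrow>\<^sub>E fst G. inj_on f (fst H) \<and> (\<forall>e\<in>snd H. f ` e \<in> snd G)}"

lemma embeddingsD:
  assumes "f \<in> embeddings H G"
  shows "f \<in> fst H \<rightarrow>\<^sub>E fst G" "inj_on f (fst H)" "\<And>e. e \<in> snd H \<Longrightarrow> f ` e \<in> snd G"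
  using assms unfolding embeddings_def by auto

definition image_graph :: "('b \<Rightarrow> 'a) \<Rightarrow> 'b graph \<Rightarrow> 'a graph" where
  "image_graph f H = (f ` fst H, (`) f ` snd H)"

lemma finite_embeddings:
  assumes "simple_graph H" "simple_graph G"
  shows "finite (embeddings H G)"
proof (rule finite_subset)
  show "embeddings H G \<subseteq> fst H \<rightarrow>\<^sub>E fst G"
    unfolding embeddings_def by blast
  show "finite (fst H \<rightarrow>\<^sub>E fst G)"
    using assms by (simp add: simple_graph_def finite_PiE)
qed

lemma image_graph_copy:
  assumes H: "simple_graph H" and f: "f \<in> embeddings H G"
  shows "image_graph f H \<in> subgraphs G" "graph_iso (image_graph f H) H"
proof -
  have f_into: "f ` fst H \<subseteq> fst G" and inj: "inj_on f (fst H)"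
    and f_edge: "\<And>e. e \<in> snd H \<Longrightarrow> f ` e \<in> snd G"
    using f unfolding embeddings_def by auto
  show "image_graph f H \<in> subgraphs G"
    unfolding image_graph_def
    using f_into f_edge simple_graph_edge_subset[OF H] by (intro subgraphsI) (auto, blast)
  have edge_iff: "{f i, f j} \<in> (`) f ` snd H \<longleftrightarrow> {i, j} \<in> snd H"
    if "i \<in> fst H" "j \<in> fst H" for i j
  proof -
    have "f ` {i, j} = f ` e \<longleftrightarrow> {i, j} = e" if "e \<in> snd H" for e
      using inj_on_image_eq_iff[OF inj] simple_graph_edge_subset[OF H that] \<open>i \<in> fst H\<close> \<open>j \<in> fst H\<close>
      by blast
    then show ?thesis by (auto simp: image_iff)
  qed
  let ?g = "inv_into (fst H) f"
  have "bij_betw ?g (f ` fst H) (fst H)"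
    using inj by (simp add: bij_betw_inv_into inj_on_imp_bij_betw)
  moreover have "{p, q} \<in> (`) f ` snd H \<longleftrightarrow> {?g p, ?g q} \<in> snd H"
    if pq: "p \<in> f ` fst H" "q \<in> f ` fst H" for p q
  proof -
    obtain i j where "i \<in> fst H" "j \<in> fst H" "p = f i" "q = f j"
      using pq by blast
    then show ?thesis using edge_iff[of i j] inv_into_f_f[OF inj] by simp
  qed
  ultimately show "graph_iso (image_graph f H) H"
    unfolding graph_iso_def image_graph_def by auto
qed

lemma copy_eq_image_graph:
  assumes H: "simple_graph H" and G: "simple_graph G"
    and S: "S \<in> subgraphs G" "graph_iso S H"
  shows "\<exists>f\<in>embeddings H G. S = image_graph f H"
proof -
  obtain g where g: "bij_betw g (fst S) (fst H)"
    and g_edge: "\<And>u v. u \<in> fst S \<Longrightarrow> v \<in> fst S \<Longrightarrow> {u, v} \<in> snd S \<longleftrightarrow> {g u, g v} \<in> snd H"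
    using S(2) unfolding graph_iso_def by blast
  have S_sub: "fst S \<subseteq> fst G" "snd S \<subseteq> snd G" "\<And>e. e \<in> snd S \<Longrightarrow> e \<subseteq> fst S"
    using S(1) unfolding subgraphs_def by fastforce+
  define f where "f = restrict (inv_into (fst S) g) (fst H)"
  have f_bij: "bij_betw f (fst H) (fst S)"
    unfolding f_def using bij_betw_inv_into[OF g] by (simp add: bij_betw_def inj_on_def)
  have gf: "g (f i) = i" if "i \<in> fst H" for i
    using g that unfolding f_def by (simp add: bij_betw_inv_into_right)
  have vertices: "fst S = f ` fst H"
    using f_bij by (simp add: bij_betw_def)
  have edges: "snd S = (`) f ` snd H"
  proof (intro equalityI subsetI)
    fix e assume e: "e \<in> snd S"
    then obtain u v where uv: "e = {u, v}" "u \<in> fst S" "v \<in> fst S"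
      using S_sub G by (metis simple_graph_edge_cases subsetD insert_subset)
    then obtain i j where ij: "i \<in> fst H" "j \<in> fst H" "u = f i" "v = f j"
      using vertices by blast
    have "{u, v} \<in> snd S"
      using e uv by simp
    then have "{i, j} \<in> snd H"
      using g_edge[of u v] uv(2,3) ij gf by simp
    moreover have "e = f ` {i, j}"
      using uv ij by simp
    ultimately show "e \<in> (`) f ` snd H" by blast
  next
    fix e assume "e \<in> (`) f ` snd H"
    then obtain e' where e': "e' \<in> snd H" "e = f ` e'"
      by blast
    then obtain i j where ij: "e' = {i, j}" "i \<in> fst H" "j \<in> fst H"
      using simple_graph_edge_cases[OF H] by metis
    then show "e \<in> snd S"
      using g_edge[of "f i" "f j"] gf vertices e' by auto
  qed
  have "f \<in> fst H \<rightarrow>\<^sub>E fst G"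
    using vertices S_sub(1) unfolding f_def by auto
  then have "f \<in> embeddings H G"
    unfolding embeddings_def using f_bij edges S_sub(2) by (auto simp: bij_betw_def)
  moreover have "S = image_graph f H"
    unfolding image_graph_def using vertices edges by (simp add: prod_eq_iff)
  ultimately show ?thesis by blast
qed

lemma free_iff_embeddings_empty:
  assumes "simple_graph H" "simple_graph G"
  shows "free H G \<longleftrightarrow> embeddings H G = {}"
proof
  assume "free H G"
  then show "embeddings H G = {}"
    unfolding free_def using image_graph_copy[OF assms(1)] by blast
next
  assume "embeddings H G = {}"
  then show "free H G"
    unfolding free_def using copy_eq_image_graph[OF assms] by blast
qed

lemma restrict_id_embedding:
  assumes "simple_graph H"
  shows "restrict id (fst H) \<in> embeddings H H"
proof -
  have "restrict id (fst H) ` e = e" if "e \<in> snd H" for e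
    using simple_graph_edge_subset[OF assms that] by (force simp: subset_eq)
  then show ?thesis
    unfolding embeddings_def by (auto simp: inj_on_def)
qed

lemma image_compose: "B \<subseteq> A \<Longrightarrow> compose A g f ` B = g ` f ` B"
  by (auto simp: compose_eq image_iff subset_eq)

lemma compose_embeddings:
  assumes H: "simple_graph H" and \<sigma>: "\<sigma> \<in> embeddings H K" and f: "f \<in> embeddings K G"
  shows "compose (fst H) f \<sigma> \<in> embeddings H G"
proof -
  note \<sigma>D = embeddingsD[OF \<sigma>] and fD = embeddingsD[OF f]
  have "compose (fst H) f \<sigma> \<in> fst H \<rightarrow>\<^sub>E fst G"
    using \<sigma>D(1) fD(1) by (auto simp: PiE_iff compose_eq)
  moreover have "inj_on (compose (fst H) f \<sigma>) (fst H)"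
    using \<sigma>D(1,2) fD(2) by (auto simp: inj_on_def compose_eq PiE_iff)
  moreover have "compose (fst H) f \<sigma> ` e = f ` \<sigma> ` e" if "e \<in> snd H" for e
    using simple_graph_edge_subset[OF H that] by (rule image_compose)
  ultimately show ?thesis
    unfolding embeddings_def using \<sigma>D(3) fD(3) by auto
qed

lemma automorphism_image:
  assumes H: "simple_graph H" and \<sigma>: "\<sigma> \<in> embeddings H H"
  shows "\<sigma> ` fst H = fst H" "(`) \<sigma> ` snd H = snd H"
proof -
  note \<sigma>D = embeddingsD[OF \<sigma>]
  show "\<sigma> ` fst H = fst H"
    using H \<sigma>D(1,2) by (intro endo_inj_surj) (auto simp: simple_graph_def)
  have "snd H \<subseteq> Pow (fst H)"
    using simple_graph_edge_subset[OF H] by blast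
  then have "inj_on ((`) \<sigma>) (snd H)"
    using inj_on_image_Pow[OF \<sigma>D(2)] inj_on_subset by blast
  then show "(`) \<sigma> ` snd H = snd H"
    using finite_edges[OF H] \<sigma>D(3) by (intro endo_inj_surj) auto
qed

lemma image_graph_compose_automorphism:
  assumes H: "simple_graph H" and \<sigma>: "\<sigma> \<in> embeddings H H"
  shows "image_graph (compose (fst H) f \<sigma>) H = image_graph f H"
proof -
  have "compose (fst H) f \<sigma> ` A = f ` \<sigma> ` A" if "A \<subseteq> fst H" for A
    using that by (rule image_compose)
  then have "compose (fst H) f \<sigma> ` fst H = f ` \<sigma> ` fst H"
    and "(`) (compose (fst H) f \<sigma>) ` snd H = (`) f ` (`) \<sigma> ` snd H"
    using simple_graph_edge_subset[OF H] by (auto simp: image_iff)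
  then show ?thesis
    unfolding image_graph_def using automorphism_image[OF H \<sigma>] by simp
qed

lemma inj_on_compose_embedding:
  assumes "f \<in> embeddings K G"
  shows "inj_on (compose (fst H) f) (embeddings H K)"
proof (rule inj_onI)
  fix \<sigma> \<tau> assume \<sigma>: "\<sigma> \<in> embeddings H K" and \<tau>: "\<tau> \<in> embeddings H K"
    and eq: "compose (fst H) f \<sigma> = compose (fst H) f \<tau>"
  show "\<sigma> = \<tau>"
  proof (rule extensionalityI)
    show "\<sigma> x = \<tau> x" if "x \<in> fst H" for x
      using fun_cong[OF eq, of x] that embeddingsD(1)[OF \<sigma>] embeddingsD(1)[OF \<tau>]
        embeddingsD(2)[OF assms] by (auto simp: compose_eq inj_on_def)
  qed (use embeddingsD(1)[OF \<sigma>] embeddingsD(1)[OF \<tau>] in \<open>auto simp: PiE_def\<close>)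
qed

lemma embeddings_same_image:
  assumes H: "simple_graph H" and f0: "f0 \<in> embeddings H G"
  shows "{f \<in> embeddings H G. image_graph f H = image_graph f0 H} =
    compose (fst H) f0 ` embeddings H H"
proof (intro equalityI subsetI)
  fix f assume "f \<in> {f \<in> embeddings H G. image_graph f H = image_graph f0 H}"
  then have f: "f \<in> embeddings H G" and same: "f ` fst H = f0 ` fst H" "(`) f ` snd H = (`) f0 ` snd H"
    by (auto simp: image_graph_def)
  note fD = embeddingsD[OF f] and f0D = embeddingsD[OF f0]
  define \<sigma> where "\<sigma> = compose (fst H) (inv_into (fst H) f0) f"
  have f_in: "f x \<in> f0 ` fst H" if "x \<in> fst H" for x
    using same(1) that by blast
  have \<sigma>_eq: "\<sigma> x = inv_into (fst H) f0 (f x)" if "x \<in> fst H" for x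
    using that by (simp add: \<sigma>_def compose_eq)
  have "\<sigma> x \<in> fst H" if "x \<in> fst H" for x
    using \<sigma>_eq[OF that] inv_into_into[OF f_in[OF that]] by simp
  then have "\<sigma> \<in> fst H \<rightarrow>\<^sub>E fst H"
    by (simp add: PiE_iff \<sigma>_def)
  moreover have "inj_on \<sigma> (fst H)"
    unfolding \<sigma>_def
  proof (rule inj_on_compose)
    show "bij_betw f (fst H) (f0 ` fst H)"
      using fD(2) same(1) by (simp add: bij_betw_def)
    show "inj_on (inv_into (fst H) f0) (f0 ` fst H)"
      by (rule inj_on_inv_into) simp
  qed
  moreover have "\<sigma> ` e \<in> snd H" if e: "e \<in> snd H" for e
  proof -
    have "f ` e \<in> (`) f0 ` snd H"
      using e same(2) by blast
    then obtain e' where e': "e' \<in> snd H" "f ` e = f0 ` e'"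
      by blast
    have "\<sigma> ` e = inv_into (fst H) f0 ` f ` e"
      unfolding \<sigma>_def using simple_graph_edge_subset[OF H e] by (rule image_compose)
    also have "\<dots> = e'"
      using e' f0D(2) simple_graph_edge_subset[OF H e'(1)] by simp
    finally show ?thesis using e' by simp
  qed
  ultimately have "\<sigma> \<in> embeddings H H"
    unfolding embeddings_def by blast
  moreover have "f = compose (fst H) f0 \<sigma>"
  proof (rule extensionalityI)
    show "f x = compose (fst H) f0 \<sigma> x" if "x \<in> fst H" for x
      using that f_in \<sigma>_eq by (simp add: compose_eq f_inv_into_f)
  qed (use fD(1) in \<open>auto simp: PiE_def\<close>)
  ultimately show "f \<in> compose (fst H) f0 ` embeddings H H"
    by blast
next
  fix f assume "f \<in> compose (fst H) f0 ` embeddings H H"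
  then obtain \<sigma> where "\<sigma> \<in> embeddings H H" "f = compose (fst H) f0 \<sigma>"
    by blast
  then show "f \<in> {f \<in> embeddings H G. image_graph f H = image_graph f0 H}"
    using compose_embeddings[OF H _ f0] image_graph_compose_automorphism[OF H] by simp
qed

lemma card_embeddings_count_copies:
  assumes H: "simple_graph H" and G: "simple_graph G"
  shows "card (embeddings H G) = card (embeddings H H) * count_copies H G"
proof -
  define copies where "copies = {S \<in> subgraphs G. graph_iso S H}"
  define fiber where "fiber S = {f \<in> embeddings H G. image_graph f H = S}" for S
  have "copies \<subseteq> (\<lambda>f. image_graph f H) ` embeddings H G"
  proof
    fix S assume "S \<in> copies"
    then obtain f where "f \<in> embeddings H G" "S = image_graph f H"
      using copy_eq_image_graph[OF H G] unfolding copies_def by blast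
    then show "S \<in> (\<lambda>f. image_graph f H) ` embeddings H G" by blast
  qed
  then have "finite copies"
    using finite_embeddings[OF H G] finite_surj by blast
  have card_fiber: "card (fiber S) = card (embeddings H H)" if "S \<in> copies" for S
  proof -
    obtain f0 where f0: "f0 \<in> embeddings H G" "S = image_graph f0 H"
      using copy_eq_image_graph[OF H G] \<open>S \<in> copies\<close> unfolding copies_def by blast
    then have "fiber S = compose (fst H) f0 ` embeddings H H"
      unfolding fiber_def using embeddings_same_image[OF H f0(1)] by simp
    then show ?thesis
      using card_image[OF inj_on_compose_embedding[OF f0(1)]] by simp
  qed
  have "embeddings H G = (\<Union>S\<in>copies. fiber S)"
  proof (intro equalityI subsetI)
    fix f assume "f \<in> embeddings H G"
    then have "image_graph f H \<in> copies" "f \<in> fiber (image_graph f H)"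
      using image_graph_copy[OF H \<open>f \<in> embeddings H G\<close>] unfolding copies_def fiber_def by auto
    then show "f \<in> (\<Union>S\<in>copies. fiber S)" by blast
  qed (auto simp: fiber_def)
  then have "card (embeddings H G) = card (\<Union>S\<in>copies. fiber S)"
    by (rule arg_cong)
  also have "\<dots> = (\<Sum>S\<in>copies. card (fiber S))"
  proof (rule card_UN_disjoint)
    show "finite copies" by fact
    show "\<forall>S\<in>copies. finite (fiber S)"
      unfolding fiber_def using finite_embeddings[OF H G] by simp
    show "\<forall>S\<in>copies. \<forall>T\<in>copies. S \<noteq> T \<longrightarrow> fiber S \<inter> fiber T = {}"
      unfolding fiber_def by blast
  qed
  also have "\<dots> = card copies * card (embeddings H H)"
    using card_fiber by simp
  finally show ?thesis
    unfolding count_copies_def copies_def by simp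
qed

lemma count_copies_le_iff:
  assumes "simple_graph H" "simple_graph G" "simple_graph G'"
  shows "count_copies H G \<le> count_copies H G' \<longleftrightarrow>
    card (embeddings H G) \<le> card (embeddings H G')"
proof -
  have "restrict id (fst H) \<in> embeddings H H"
    using restrict_id_embedding[OF assms(1)] .
  then have "card (embeddings H H) > 0"
    using finite_embeddings[OF assms(1,1)] card_gt_0_iff by blast
  then show ?thesis
    using card_embeddings_count_copies[OF assms(1,2)] card_embeddings_count_copies[OF assms(1,3)] by simp
qed

lemma bij_betw_embeddings_lists:
  assumes H: "simple_graph H" "fst H = {0..<k}"
  shows "bij_betw (\<lambda>f. map f [0..<k]) (embeddings H G)
    {xs. length xs = k \<and> distinct xs \<and> set xs \<subseteq> fst G \<and> (\<forall>e\<in>snd H. (!) xs ` e \<in> snd G)}"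
    (is "bij_betw _ _ ?L")
proof (rule bij_betw_byWitness[where f' = "\<lambda>xs. restrict (nth xs) {0..<k}"])
  have edge_sub: "e \<subseteq> {0..<k}" if "e \<in> snd H" for e
    using simple_graph_edge_subset[OF H(1) that] H(2) by simp
  show "\<forall>f\<in>embeddings H G. restrict (nth (map f [0..<k])) {0..<k} = f"
    using H(2) by (auto simp: embeddings_def PiE_iff extensional_def)
  show "\<forall>xs\<in>?L. map (restrict (nth xs) {0..<k}) [0..<k] = xs"
    by (auto intro: nth_equalityI)
  show "(\<lambda>f. map f [0..<k]) ` embeddings H G \<subseteq> ?L"
  proof (safe)
    fix f assume f: "f \<in> embeddings H G"
    note fD = embeddingsD[OF f]
    show "distinct (map f [0..<k])"
      using fD(2) H(2) by (simp add: distinct_map)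
    show "x \<in> fst G" if "x \<in> set (map f [0..<k])" for x
      using that fD(1) H(2) by auto
    show "(!) (map f [0..<k]) ` e \<in> snd G" if "e \<in> snd H" for e
    proof -
      have "(!) (map f [0..<k]) ` e = f ` e"
        using edge_sub[OF that] by (force simp: subset_eq)
      then show ?thesis using fD(3)[OF that] by simp
    qed
  qed simp
  show "(\<lambda>xs. restrict (nth xs) {0..<k}) ` ?L \<subseteq> embeddings H G"
  proof
    fix g assume "g \<in> (\<lambda>xs. restrict (nth xs) {0..<k}) ` ?L"
    then obtain xs where g: "g = restrict (nth xs) {0..<k}"
      and xs: "length xs = k" "distinct xs" "set xs \<subseteq> fst G" "\<forall>e\<in>snd H. (!) xs ` e \<in> snd G"
      by blast
    have "restrict (nth xs) {0..<k} \<in> fst H \<rightarrow>\<^sub>E fst G"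
      using xs(1,3) H(2) by (auto simp: PiE_iff)
    moreover have "inj_on (restrict (nth xs) {0..<k}) (fst H)"
      using xs(1,2) H(2) by (simp add: inj_on_def nth_eq_iff_index_eq)
    moreover have "restrict (nth xs) {0..<k} ` e \<in> snd G" if "e \<in> snd H" for e
    proof -
      have "restrict (nth xs) {0..<k} ` e = (!) xs ` e"
        using edge_sub[OF that] by (force simp: subset_eq)
      then show ?thesis using xs(4) that by simp
    qed
    ultimately show "g \<in> embeddings H G"
      unfolding g embeddings_def by blast
  qed
qed

definition paths3 :: "'a graph \<Rightarrow> 'a list set" where
  "paths3 G = {[x, u, y] | x u y. {x, u} \<in> snd G \<and> {u, y} \<in> snd G \<and> x \<noteq> y}"

definition paths4 :: "'a graph \<Rightarrow> 'a list set" where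
  "paths4 G = {[x, u, v, y] | x u v y. {x, u} \<in> snd G \<and> {u, v} \<in> snd G \<and> {v, y} \<in> snd G \<and>
     x \<noteq> v \<and> u \<noteq> y \<and> x \<noteq> y}"

definition cycles4 :: "'a graph \<Rightarrow> 'a list set" where
  "cycles4 G = {[x, u, v, y] | x u v y. {x, u} \<in> snd G \<and> {u, v} \<in> snd G \<and> {v, y} \<in> snd G \<and>
     {y, x} \<in> snd G \<and> x \<noteq> v \<and> u \<noteq> y}"

lemma card_embeddings_P3:
  assumes G: "simple_graph G"
  shows "card (embeddings P3 G) = card (paths3 G)"
proof -
  have "fst P3 = {0..<3}"
    by (auto simp: P3_def)
  note bij = bij_betw_embeddings_lists[OF simple_P3 this, of G]
  have "{xs. length xs = 3 \<and> distinct xs \<and> set xs \<subseteq> fst G \<and> (\<forall>e\<in>snd P3. (!) xs ` e \<in> snd G)} =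
      paths3 G" (is "?L = _")
  proof (intro equalityI subsetI)
    fix xs assume "xs \<in> ?L"
    then obtain a b c where "xs = [a, b, c]" "distinct [a, b, c]"
      "\<forall>e\<in>snd P3. (!) [a, b, c] ` e \<in> snd G"
      by (auto simp: numeral_eq_Suc length_Suc_conv)
    then show "xs \<in> paths3 G"
      by (auto simp: P3_def paths3_def)
  next
    fix xs assume "xs \<in> paths3 G"
    then obtain a b c where "xs = [a, b, c]" "{a, b} \<in> snd G" "{b, c} \<in> snd G" "a \<noteq> c"
      unfolding paths3_def by blast
    then show "xs \<in> ?L"
      using simple_graph_edgeD[OF G] by (auto simp: P3_def)
  qed
  then show ?thesis
    using bij_betw_same_card[OF bij] by simp
qed

lemma card_embeddings_P4:
  assumes G: "simple_graph G"
  shows "card (embeddings P4 G) = card (paths4 G)"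
proof -
  have "fst P4 = {0..<4}"
    by (auto simp: P4_def)
  note bij = bij_betw_embeddings_lists[OF simple_P4 this, of G]
  have "{xs. length xs = 4 \<and> distinct xs \<and> set xs \<subseteq> fst G \<and> (\<forall>e\<in>snd P4. (!) xs ` e \<in> snd G)} =
      paths4 G" (is "?L = _")
  proof (intro equalityI subsetI)
    fix xs assume "xs \<in> ?L"
    then obtain a b c d where "xs = [a, b, c, d]" "distinct [a, b, c, d]"
      "\<forall>e\<in>snd P4. (!) [a, b, c, d] ` e \<in> snd G"
      by (auto simp: numeral_eq_Suc length_Suc_conv)
    then show "xs \<in> paths4 G"
      by (auto simp: P4_def paths4_def)
  next
    fix xs assume "xs \<in> paths4 G"
    then obtain a b c d where "xs = [a, b, c, d]" "{a, b} \<in> snd G" "{b, c} \<in> snd G" "{c, d} \<in> snd G"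
      "a \<noteq> c" "b \<noteq> d" "a \<noteq> d"
      unfolding paths4_def by blast
    then show "xs \<in> ?L"
      using simple_graph_edgeD[OF G] by (auto simp: P4_def)
  qed
  then show ?thesis
    using bij_betw_same_card[OF bij] by simp
qed

lemma card_embeddings_C4:
  assumes G: "simple_graph G"
  shows "card (embeddings C4 G) = card (cycles4 G)"
proof -
  have "fst C4 = {0..<4}"
    by (auto simp: C4_def)
  note bij = bij_betw_embeddings_lists[OF simple_C4 this, of G]
  have "{xs. length xs = 4 \<and> distinct xs \<and> set xs \<subseteq> fst G \<and> (\<forall>e\<in>snd C4. (!) xs ` e \<in> snd G)} =
      cycles4 G" (is "?L = _")
  proof (intro equalityI subsetI)
    fix xs assume "xs \<in> ?L"
    then obtain a b c d where "xs = [a, b, c, d]" "distinct [a, b, c, d]"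
      "\<forall>e\<in>snd C4. (!) [a, b, c, d] ` e \<in> snd G"
      by (auto simp: numeral_eq_Suc length_Suc_conv)
    then show "xs \<in> cycles4 G"
      by (auto simp: C4_def cycles4_def insert_commute)
  next
    fix xs assume "xs \<in> cycles4 G"
    then obtain a b c d where "xs = [a, b, c, d]" "{a, b} \<in> snd G" "{b, c} \<in> snd G" "{c, d} \<in> snd G"
      "{d, a} \<in> snd G" "a \<noteq> c" "b \<noteq> d"
      unfolding cycles4_def by blast
    then show "xs \<in> ?L"
      using simple_graph_edgeD[OF G] by (auto simp: C4_def insert_commute)
  qed
  then show ?thesis
    using bij_betw_same_card[OF bij] by simp
qed

lemma finite_paths4:
  assumes "simple_graph G"
  shows "finite (paths4 G)"
proof (rule finite_subset)
  show "paths4 G \<subseteq> {xs. set xs \<subseteq> fst G \<and> length xs = 4}"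
    unfolding paths4_def using simple_graph_edgeD(2,3)[OF assms] by auto
  show "finite {xs. set xs \<subseteq> fst G \<and> length xs = 4}"
    using assms by (simp add: simple_graph_def finite_lists_length_eq)
qed

lemma cycles4_subset_paths4:
  assumes G: "simple_graph G"
  shows "cycles4 G \<subseteq> paths4 G"
proof
  fix xs assume "xs \<in> cycles4 G"
  then obtain x u v y where "xs = [x, u, v, y]" "{x, u} \<in> snd G" "{u, v} \<in> snd G"
    "{v, y} \<in> snd G" "{y, x} \<in> snd G" "x \<noteq> v" "u \<noteq> y"
    unfolding cycles4_def by blast
  moreover from this have "x \<noteq> y"
    using simple_graph_edgeD(1)[OF G] by metis
  ultimately show "xs \<in> paths4 G"
    unfolding paths4_def by blast
qed

lemma paw_embedding:
  assumes G: "simple_graph G" and "distinct [a, b, c, d]"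
    and "{a, b} \<in> snd G" "{b, c} \<in> snd G" "{a, c} \<in> snd G" "{c, d} \<in> snd G"
  shows "embeddings T1 G \<noteq> {}"
proof -
  have "fst T1 = {0..<4}"
    by (auto simp: T1_def)
  note bij = bij_betw_embeddings_lists[OF simple_T1 this, of G]
  have "[a, b, c, d] \<in>
      {xs. length xs = 4 \<and> distinct xs \<and> set xs \<subseteq> fst G \<and> (\<forall>e\<in>snd T1. (!) xs ` e \<in> snd G)}"
    using assms simple_graph_edgeD[OF G] by (auto simp: T1_def)
  then show ?thesis
    using bij_betwE[OF bij_betw_inv_into[OF bij]] by blast
qed

section \<open>Degrees\<close>

definition neighbours :: "'a graph \<Rightarrow> 'a \<Rightarrow> 'a set" where
  "neighbours G u = {v \<in> fst G. {u, v} \<in> snd G}"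

definition degree :: "'a graph \<Rightarrow> 'a \<Rightarrow> nat" where
  "degree G u = card (neighbours G u)"

definition arcs :: "'a graph \<Rightarrow> ('a \<times> 'a) set" where
  "arcs G = {(u, v). {u, v} \<in> snd G}"

lemma finite_neighbours: "simple_graph G \<Longrightarrow> finite (neighbours G u)"
  unfolding neighbours_def simple_graph_def by simp

lemma neighbours_iff:
  assumes "simple_graph G"
  shows "v \<in> neighbours G u \<longleftrightarrow> {u, v} \<in> snd G"
  unfolding neighbours_def using simple_graph_edgeD(3)[OF assms, of u v] by blast

lemma arcs_eq_Sigma:
  assumes "simple_graph G"
  shows "arcs G = Sigma (fst G) (neighbours G)"
proof (rule set_eqI)
  fix p :: "'a \<times> 'a"
  show "p \<in> arcs G \<longleftrightarrow> p \<in> Sigma (fst G) (neighbours G)"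
    using simple_graph_edgeD(2)[OF assms, of "fst p" "snd p"] neighbours_iff[OF assms, of "snd p" "fst p"]
    unfolding arcs_def by (cases p) auto
qed

lemma finite_arcs: "simple_graph G \<Longrightarrow> finite (arcs G)"
  using arcs_eq_Sigma finite_neighbours unfolding simple_graph_def by (metis finite_SigmaI)

lemma degree_pos_of_arc:
  assumes "simple_graph G" "(u, v) \<in> arcs G"
  shows "0 < degree G u" "0 < degree G v"
proof -
  have "v \<in> neighbours G u" "u \<in> neighbours G v"
    using assms(2) neighbours_iff[OF assms(1)] by (simp_all add: arcs_def insert_commute)
  then show "0 < degree G u" "0 < degree G v"
    unfolding degree_def using finite_neighbours[OF assms(1)] card_gt_0_iff by blast+
qed

lemma sum_arcs_fst:
  assumes "simple_graph G"
  shows "(\<Sum>p\<in>arcs G. f (fst p)) = (\<Sum>u\<in>fst G. degree G u * f u)"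
proof -
  have "finite (fst G)"
    using assms by (simp add: simple_graph_def)
  then show ?thesis
    unfolding arcs_eq_Sigma[OF assms] degree_def
    using sum.Sigma[of "fst G" "neighbours G" "\<lambda>u v. f u"] finite_neighbours[OF assms]
    by (simp add: case_prod_beta)
qed

lemma sum_arcs_snd:
  "(\<Sum>p\<in>arcs G. f (snd p)) = (\<Sum>p\<in>arcs G. f (fst p))"
proof -
  have "prod.swap ` arcs G = arcs G"
    unfolding arcs_def by (auto simp: insert_commute image_iff)
  then show ?thesis
    using sum.reindex[of prod.swap "arcs G" "\<lambda>p. f (fst p)"] by simp
qed

lemma card_arcs: "simple_graph G \<Longrightarrow> card (arcs G) = (\<Sum>u\<in>fst G. degree G u)"
  using sum_arcs_fst[of G "\<lambda>_. 1"] by simp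

lemma card_paths3:
  assumes G: "simple_graph G"
  shows "card (paths3 G) = (\<Sum>u\<in>fst G. degree G u * (degree G u - 1))"
proof -
  let ?S = "SIGMA u:fst G. SIGMA x:neighbours G u. neighbours G u - {x}"
  have "paths3 G = (\<lambda>(u, x, y). [x, u, y]) ` ?S"
    unfolding paths3_def using neighbours_iff[OF G] simple_graph_edgeD[OF G]
    by (auto simp: image_iff insert_commute)
  moreover have "inj_on (\<lambda>(u, x, y). [x, u, y]) ?S"
    by (auto simp: inj_on_def)
  ultimately have "card (paths3 G) = card ?S"
    by (simp add: card_image)
  also have "\<dots> = (\<Sum>u\<in>fst G. \<Sum>x\<in>neighbours G u. degree G u - 1)"
    using G finite_neighbours[OF G]
    by (simp add: card_SigmaI simple_graph_def degree_def finite_SigmaI)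
  finally show ?thesis
    by (simp add: degree_def)
qed

lemma card_paths4_le_sum_arcs:
  assumes G: "simple_graph G"
  shows "card (paths4 G) \<le> (\<Sum>(u, v)\<in>arcs G. (degree G u - 1) * (degree G v - 1))"
proof -
  let ?S = "SIGMA (u, v):arcs G. (neighbours G u - {v}) \<times> (neighbours G v - {u})"
  have "finite ?S"
    using finite_arcs[OF G] finite_neighbours[OF G] by auto
  have "paths4 G \<subseteq> (\<lambda>((u, v), x, y). [x, u, v, y]) ` ?S"
  proof
    fix xs assume "xs \<in> paths4 G"
    then obtain x u v y where xs: "xs = [x, u, v, y]" and edges: "{x, u} \<in> snd G" "{u, v} \<in> snd G"
      "{v, y} \<in> snd G" and "x \<noteq> v" "u \<noteq> y"
      unfolding paths4_def by blast
    then have "((u, v), x, y) \<in> ?S"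
      using neighbours_iff[OF G] by (simp add: arcs_def insert_commute)
    then show "xs \<in> (\<lambda>((u, v), x, y). [x, u, v, y]) ` ?S"
      unfolding xs by (rule rev_image_eqI) simp
  qed
  then have "card (paths4 G) \<le> card ?S"
    using \<open>finite ?S\<close> by (meson card_image_le card_mono finite_imageI le_trans)
  also have "\<dots> = (\<Sum>(u, v)\<in>arcs G. (degree G u - 1) * (degree G v - 1))"
  proof (subst card_SigmaI)
    show "(\<Sum>p\<in>arcs G. card (case p of (u, v) \<Rightarrow> (neighbours G u - {v}) \<times> (neighbours G v - {u}))) =
        (\<Sum>(u, v)\<in>arcs G. (degree G u - 1) * (degree G v - 1))"
      using neighbours_iff[OF G] finite_neighbours[OF G]
      by (intro sum.cong) (auto simp: arcs_def degree_def card_cartesian_product insert_commute)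
  qed (use finite_arcs[OF G] finite_neighbours[OF G] in auto)
  finally show ?thesis .
qed

section \<open>Graphs whose adjacent vertices have degree sum at most n\<close>

lemma four_mult_le_square:
  fixes x m :: nat
  assumes "4 * x \<le> m * m"
  shows "x \<le> (m div 2) * (m - m div 2)"
proof -
  consider k where "m = 2 * k" | k where "m = 2 * k + 1"
    by (metis evenE oddE)
  then show ?thesis
  proof cases
    case 1
    note m = this
    then have "4 * x \<le> 4 * (k * k)" using assms by (simp add: algebra_simps)
    then show ?thesis using m by simp
  next
    case 2
    note m = this
    define K where "K = k * k + k"
    have "4 * x \<le> 4 * K + 1" using assms m by (simp add: K_def algebra_simps)
    then have "x \<le> K" by presburger
    then show ?thesis using m by (simp add: K_def algebra_simps)
  qed
qed

lemma two_mult_le_square: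
  fixes x m :: nat
  assumes "2 * x \<le> m * m"
  shows "x \<le> 2 * ((m div 2) * (m - m div 2))"
proof -
  consider k where "m = 2 * k" | k where "m = 2 * k + 1"
    by (metis evenE oddE)
  then show ?thesis
  proof cases
    case 1
    note m = this
    then have "2 * x \<le> 4 * (k * k)" using assms by (simp add: algebra_simps)
    then show ?thesis using m by simp
  next
    case 2
    note m = this
    define K where "K = k * k + k"
    have "2 * x \<le> 4 * K + 1" using assms m by (simp add: K_def algebra_simps)
    then have "x \<le> 2 * K" by presburger
    then show ?thesis using m by (simp add: K_def algebra_simps)
  qed
qed

lemma mult_le_of_add_le:
  fixes p q m :: nat
  assumes "p + q \<le> m"
  shows "p * q \<le> (m div 2) * (m - m div 2)"
proof (rule four_mult_le_square)
  have "4 * (p * q) \<le> (p + q) * (p + q)"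
  proof -
    have "4 * int (p * q) \<le> int ((p + q) * (p + q))"
      using zero_le_power2[of "int p - int q"] by (simp add: power2_eq_square algebra_simps)
    then show ?thesis by linarith
  qed
  also have "\<dots> \<le> m * m"
    using assms by (simp add: mult_le_mono)
  finally show "4 * (p * q) \<le> m * m" .
qed

lemma half_diff_two:
  fixes n :: nat
  shows "(n - 2) div 2 = n div 2 - 1" "n - 2 - (n div 2 - 1) = n - n div 2 - 1"
proof -
  consider "n = 0" | "n = 1" | m where "n = m + 2"
    by (metis One_nat_def add_2_eq_Suc' not0_implies_Suc)
  then show "(n - 2) div 2 = n div 2 - 1" "n - 2 - (n div 2 - 1) = n - n div 2 - 1"
    by cases simp_all
qed

locale degree_sum_bounded =
  fixes G :: "'a graph" and n :: nat
  assumes simple: "simple_graph G"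
    and card_vertices: "card (fst G) = n"
    and arc_degree_sum: "(u, v) \<in> arcs G \<Longrightarrow> degree G u + degree G v \<le> n"
begin

lemma sum_degree_squares_le: "2 * (\<Sum>u\<in>fst G. degree G u * degree G u) \<le> n * card (arcs G)"
proof -
  have "2 * (\<Sum>u\<in>fst G. degree G u * degree G u) =
      (\<Sum>p\<in>arcs G. degree G (fst p)) + (\<Sum>p\<in>arcs G. degree G (snd p))"
    using sum_arcs_fst[OF simple, of "degree G"] sum_arcs_snd[of "degree G" G] by simp
  also have "\<dots> = (\<Sum>p\<in>arcs G. degree G (fst p) + degree G (snd p))"
    by (simp add: sum.distrib)
  also have "\<dots> \<le> (\<Sum>p\<in>arcs G. n)"
    using arc_degree_sum by (intro sum_mono) auto
  finally show ?thesis
    by (simp add: mult.commute)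
qed

lemma card_arcs_le: "card (arcs G) \<le> 2 * ((n div 2) * (n - n div 2))"
proof (rule two_mult_le_square)
  let ?D = "card (arcs G)" and ?Q = "\<Sum>u\<in>fst G. degree G u * degree G u"
  have "real (?D * ?D) \<le> real (n * ?Q)"
    using sum_squared_le_sum_of_squares[of "\<lambda>u. real (degree G u)" "fst G"]
    by (simp add: card_arcs[OF simple] card_vertices power2_eq_square mult.commute)
  then have "?D * ?D \<le> n * ?Q"
    by (simp only: of_nat_le_iff)
  then have "(2 * ?D) * ?D \<le> n * (2 * ?Q)"
    by simp
  also have "\<dots> \<le> n * (n * ?D)"
    using sum_degree_squares_le by simp
  finally have "(2 * ?D) * ?D \<le> (n * n) * ?D"
    by (simp add: algebra_simps)
  then show "2 * ?D \<le> n * n"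
    by (cases "?D = 0") simp_all
qed

lemma card_paths3_le: "card (paths3 G) \<le> (n - 2) * ((n div 2) * (n - n div 2))"
proof -
  let ?D = "card (arcs G)" and ?Q = "\<Sum>u\<in>fst G. degree G u * degree G u"
  have "card (paths3 G) + ?D = ?Q"
    unfolding card_paths3[OF simple] card_arcs[OF simple] sum.distrib[symmetric]
    by (rule sum.cong) (auto simp: algebra_simps diff_mult_distrib2)
  then have "2 * card (paths3 G) \<le> (n - 2) * ?D"
    using sum_degree_squares_le by (simp add: diff_mult_distrib)
  also have "\<dots> \<le> (n - 2) * (2 * ((n div 2) * (n - n div 2)))"
    using card_arcs_le by (rule mult_le_mono2)
  finally show ?thesis
    by simp
qed

lemma card_paths4_le:
  "card (paths4 G) \<le> 2 * ((n div 2) * (n div 2 - 1) * ((n - n div 2) * (n - n div 2 - 1)))"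
proof -
  have "card (paths4 G) \<le> (\<Sum>(u, v)\<in>arcs G. (degree G u - 1) * (degree G v - 1))"
    by (rule card_paths4_le_sum_arcs[OF simple])
  also have "\<dots> \<le> (\<Sum>(u, v)\<in>arcs G. (n div 2 - 1) * (n - n div 2 - 1))"
  proof (rule sum_mono, clarify)
    fix u v assume uv: "(u, v) \<in> arcs G"
    have "(degree G u - 1) + (degree G v - 1) \<le> n - 2"
      using arc_degree_sum[OF uv] degree_pos_of_arc[OF simple uv] by linarith
    then have "(degree G u - 1) * (degree G v - 1) \<le> ((n - 2) div 2) * ((n - 2) - (n - 2) div 2)"
      by (rule mult_le_of_add_le)
    then show "(degree G u - 1) * (degree G v - 1) \<le> (n div 2 - 1) * (n - n div 2 - 1)"
      by (simp only: half_diff_two)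
  qed
  also have "\<dots> = card (arcs G) * ((n div 2 - 1) * (n - n div 2 - 1))"
    by simp
  also have "\<dots> \<le> 2 * ((n div 2) * (n - n div 2)) * ((n div 2 - 1) * (n - n div 2 - 1))"
    using card_arcs_le by (rule mult_le_mono1)
  finally show ?thesis
    by (simp add: ac_simps)
qed

end

section \<open>The balanced complete bipartite graph\<close>

lemma card_distinct_pairs:
  assumes "finite X"
  shows "card (SIGMA x:X. X - {x}) = card X * (card X - 1)"
  using assms by (simp add: card_SigmaI)

lemma vertices_T2: "fst (T2 n) = {0..<n}"
  by (simp add: T2_def)

lemma T2_edge_iff:
  "{p, q} \<in> snd (T2 n) \<longleftrightarrow>
     (p < n div 2 \<and> n div 2 \<le> q \<and> q < n) \<or> (q < n div 2 \<and> n div 2 \<le> p \<and> p < n)"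
  unfolding T2_def by (auto simp: doubleton_eq_iff)

lemma simple_T2: "simple_graph (T2 n)"
  unfolding T2_def
proof (rule simple_graphI)
  show "\<forall>e\<in>{{u, v} |u v. u < n div 2 \<and> n div 2 \<le> v \<and> v < n}.
      \<exists>u\<in>{0..<n}. \<exists>v\<in>{0..<n}. u \<noteq> v \<and> e = {u, v}"
  proof
    fix e assume "e \<in> {{u, v} |u v. u < n div 2 \<and> n div 2 \<le> v \<and> v < n}"
    then obtain u v where "e = {u, v}" "u < n div 2" "n div 2 \<le> v" "v < n"
      by blast
    then have "u \<in> {0..<n}" "v \<in> {0..<n}" "u \<noteq> v" "e = {u, v}"
      by auto
    then show "\<exists>u\<in>{0..<n}. \<exists>v\<in>{0..<n}. u \<noteq> v \<and> e = {u, v}"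
      by blast
  qed
qed simp

lemma degree_T2:
  assumes "u < n"
  shows "degree (T2 n) u = (if u < n div 2 then n - n div 2 else n div 2)"
proof -
  have "neighbours (T2 n) u = (if u < n div 2 then {n div 2..<n} else {0..<n div 2})"
    using assms by (auto simp: neighbours_def T2_edge_iff vertices_T2)
  then show ?thesis
    by (simp add: degree_def)
qed

lemma card_paths3_T2: "card (paths3 (T2 n)) = (n - 2) * ((n div 2) * (n - n div 2))"
proof -
  let ?h = "n div 2" and ?b = "n - n div 2"
  have "card (paths3 (T2 n)) = (\<Sum>u\<in>{0..<?h}. degree (T2 n) u * (degree (T2 n) u - 1)) +
      (\<Sum>u\<in>{?h..<n}. degree (T2 n) u * (degree (T2 n) u - 1))"
    unfolding card_paths3[OF simple_T2] vertices_T2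
    by (rule sum.atLeastLessThan_concat[symmetric]) simp_all
  also have "\<dots> = ?h * (?b * (?b - 1)) + ?b * (?h * (?h - 1))"
    by (simp add: degree_T2)
  also have "\<dots> = (?h * ?b) * ((?b - 1) + (?h - 1))"
    by (simp add: add_mult_distrib2 mult.assoc mult.left_commute)
  also have "\<dots> = (n - 2) * (?h * ?b)"
  proof (cases "?h = 0")
    case False
    then have "(?b - 1) + (?h - 1) = n - 2"
      by linarith
    then show ?thesis
      by simp
  qed simp
  finally show ?thesis .
qed

lemma card_cycles4_T2:
  "2 * ((n div 2) * (n div 2 - 1) * ((n - n div 2) * (n - n div 2 - 1))) \<le> card (cycles4 (T2 n))"
proof -
  define A where "A = {0..<n div 2}"
  define B where "B = {n div 2..<n}"
  let ?pairs = "\<lambda>X. SIGMA x:X. X - {x}"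
  let ?f = "\<lambda>((x :: nat, v), (u, y)). [x, u, v, y]"
  have card_f: "card (?f ` (?pairs X \<times> ?pairs Y)) = card X * (card X - 1) * (card Y * (card Y - 1))"
    if "finite X" "finite Y" for X Y
  proof -
    have "inj_on ?f (?pairs X \<times> ?pairs Y)"
      by (auto simp: inj_on_def)
    then show ?thesis
      using that by (simp add: card_image card_cartesian_product card_distinct_pairs)
  qed
  have cycles: "?f ` (?pairs X \<times> ?pairs Y) \<subseteq> cycles4 (T2 n)"
    if XY: "\<And>x y. x \<in> X \<Longrightarrow> y \<in> Y \<Longrightarrow> {x, y} \<in> snd (T2 n)" for X Y
  proof (rule image_subsetI)
    fix z assume "z \<in> ?pairs X \<times> ?pairs Y"
    then obtain x v u y where z: "z = ((x, v), u, y)" and "x \<in> X" "v \<in> X" "v \<noteq> x"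
      "u \<in> Y" "y \<in> Y" "y \<noteq> u"
      by auto
    moreover from this have "{x, u} \<in> snd (T2 n)" "{u, v} \<in> snd (T2 n)" "{v, y} \<in> snd (T2 n)"
      "{y, x} \<in> snd (T2 n)"
      using XY[of x u] XY[of v u] XY[of v y] XY[of x y] by (simp_all add: insert_commute)
    ultimately show "?f z \<in> cycles4 (T2 n)"
      unfolding cycles4_def by auto
  qed
  have A_B: "\<And>x y. x \<in> A \<Longrightarrow> y \<in> B \<Longrightarrow> {x, y} \<in> snd (T2 n)"
    and B_A: "\<And>x y. x \<in> B \<Longrightarrow> y \<in> A \<Longrightarrow> {x, y} \<in> snd (T2 n)"
    unfolding A_def B_def T2_edge_iff by auto
  have "hd ` ?f ` (?pairs X \<times> ?pairs Y) \<subseteq> X" for X Y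
    by auto
  then have disj: "?f ` (?pairs A \<times> ?pairs B) \<inter> ?f ` (?pairs B \<times> ?pairs A) = {}"
    unfolding A_def B_def by fastforce
  have fin_f: "finite (?f ` (?pairs X \<times> ?pairs Y))" if "finite X" "finite Y" for X Y
    using that by auto
  have "2 * ((n div 2) * (n div 2 - 1) * ((n - n div 2) * (n - n div 2 - 1))) =
      card (?f ` (?pairs A \<times> ?pairs B)) + card (?f ` (?pairs B \<times> ?pairs A))"
    using card_f[of A B] card_f[of B A] by (simp add: A_def B_def)
  also have "\<dots> = card (?f ` (?pairs A \<times> ?pairs B) \<union> ?f ` (?pairs B \<times> ?pairs A))"
    using fin_f fin_f disj unfolding A_def B_def by (intro card_Un_disjoint[symmetric]) simp_all
  also have "\<dots> \<le> card (cycles4 (T2 n))"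
  proof (rule card_mono)
    show "finite (cycles4 (T2 n))"
      using finite_paths4[OF simple_T2] cycles4_subset_paths4[OF simple_T2] by (rule finite_subset[rotated])
    show "?f ` (?pairs A \<times> ?pairs B) \<union> ?f ` (?pairs B \<times> ?pairs A) \<subseteq> cycles4 (T2 n)"
      using cycles[OF A_B] cycles[OF B_A] by (rule Un_least)
  qed
  finally show ?thesis .
qed

lemma T2_free_T1: "free T1 (T2 n)"
proof -
  have "f \<notin> embeddings T1 (T2 n)" for f
  proof
    assume f: "f \<in> embeddings T1 (T2 n)"
    have "f ` {0, 1} \<in> snd (T2 n)" "f ` {1, 2} \<in> snd (T2 n)" "f ` {0, 2} \<in> snd (T2 n)"
      using embeddingsD(3)[OF f, of "{0, 1}"] embeddingsD(3)[OF f, of "{1, 2}"]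
        embeddingsD(3)[OF f, of "{0, 2}"] by (simp_all add: T1_def)
    then have "{f 0, f 1} \<in> snd (T2 n)" "{f 1, f 2} \<in> snd (T2 n)" "{f 0, f 2} \<in> snd (T2 n)"
      by simp_all
    then show False
      unfolding T2_edge_iff by linarith
  qed
  then show ?thesis
    using free_iff_embeddings_empty[OF simple_T1 simple_T2] by blast
qed

lemma ex_eq_count_copies_T2:
  assumes "free F (T2 n)"
    and "\<And>G :: nat graph. simple_graph G \<Longrightarrow> fst G = {0..<n} \<Longrightarrow> free F G \<Longrightarrow>
      count_copies H G \<le> count_copies H (T2 n)"
  shows "ex n H F = count_copies H (T2 n)"
proof -
  define graphs where "graphs = {G :: nat graph. simple_graph G \<and> fst G = {0..<n} \<and> free F G}"
  have "graphs \<subseteq> {{0..<n}} \<times> Pow (Pow {0..<n})"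
    unfolding graphs_def simple_graph_def by auto
  then have "finite graphs"
    by (rule finite_subset) simp
  moreover have "T2 n \<in> graphs"
    unfolding graphs_def using simple_T2 vertices_T2 assms(1) by blast
  ultimately have "Max (count_copies H ` graphs) = count_copies H (T2 n)"
    using assms(2) unfolding graphs_def by (intro Max_eqI) auto
  moreover have "{count_copies H G |G. simple_graph G \<and> fst G = {0..<n} \<and> free F G} =
      count_copies H ` graphs"
    unfolding graphs_def by blast
  ultimately show ?thesis
    unfolding ex_def by simp
qed

context degree_sum_bounded
begin

lemma count_copies_P3_le_T2: "count_copies P3 G \<le> count_copies P3 (T2 n)"
  unfolding count_copies_le_iff[OF simple_P3 simple simple_T2]
    card_embeddings_P3[OF simple] card_embeddings_P3[OF simple_T2] card_paths3_T2
  by (rule card_paths3_le)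

lemma card_paths4_le_card_cycles4_T2: "card (paths4 G) \<le> card (cycles4 (T2 n))"
  using card_paths4_le card_cycles4_T2 by (rule le_trans)

lemma count_copies_P4_le_T2: "count_copies P4 G \<le> count_copies P4 (T2 n)"
proof -
  have "card (paths4 G) \<le> card (paths4 (T2 n))"
    using card_paths4_le_card_cycles4_T2
      card_mono[OF finite_paths4[OF simple_T2] cycles4_subset_paths4[OF simple_T2]]
    by (rule le_trans)
  then show ?thesis
    unfolding count_copies_le_iff[OF simple_P4 simple simple_T2]
      card_embeddings_P4[OF simple] card_embeddings_P4[OF simple_T2] .
qed

lemma count_copies_C4_le_T2: "count_copies C4 G \<le> count_copies C4 (T2 n)"
proof -
  have "card (cycles4 G) \<le> card (cycles4 (T2 n))"
    using card_mono[OF finite_paths4[OF simple] cycles4_subset_paths4[OF simple]]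
      card_paths4_le_card_cycles4_T2
    by (rule le_trans)
  then show ?thesis
    unfolding count_copies_le_iff[OF simple_C4 simple simple_T2]
      card_embeddings_C4[OF simple] card_embeddings_C4[OF simple_T2] .
qed

end

section \<open>Paw-free graphs\<close>

lemma card_le_2_of_subset_doubleton:
  assumes "A \<subseteq> {a, b}"
  shows "card A \<le> 2"
proof -
  have "card A \<le> card {a, b}"
    using assms by (intro card_mono) simp_all
  also have "\<dots> \<le> 2"
    by (cases "a = b") simp_all
  finally show ?thesis .
qed

lemma pawfree_triangle_neighbours:
  assumes G: "simple_graph G" "free T1 G"
    and edges: "{u, v} \<in> snd G" "{u, w} \<in> snd G" "{v, w} \<in> snd G"
  shows "neighbours G u \<subseteq> {v, w}"
proof
  fix z assume z: "z \<in> neighbours G u"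
  show "z \<in> {v, w}"
  proof (rule ccontr)
    assume "z \<notin> {v, w}"
    moreover have "{u, z} \<in> snd G"
      using z neighbours_iff[OF G(1)] by blast
    ultimately have "distinct [v, w, u, z]"
      using edges simple_graph_edgeD(1)[OF G(1)] by auto
    then have "embeddings T1 G \<noteq> {}"
      by (rule paw_embedding[OF G(1)]) (use edges \<open>{u, z} \<in> snd G\<close> in \<open>simp_all add: insert_commute\<close>)
    then show False
      using G free_iff_embeddings_empty[OF simple_T1 G(1)] by simp
  qed
qed

lemma pawfree_edge_degree_sum:
  assumes G: "simple_graph G" "free T1 G" "4 \<le> card (fst G)" and uv: "{u, v} \<in> snd G"
  shows "degree G u + degree G v \<le> card (fst G)"
proof (cases "neighbours G u \<inter> neighbours G v = {}")
  case True
  have "degree G u + degree G v = card (neighbours G u \<union> neighbours G v)"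
    unfolding degree_def using True finite_neighbours[OF G(1)] by (simp add: card_Un_disjoint)
  also have "\<dots> \<le> card (fst G)"
    using G(1) by (intro card_mono) (auto simp: simple_graph_def neighbours_def)
  finally show ?thesis .
next
  case False
  then obtain w where "{u, w} \<in> snd G" "{v, w} \<in> snd G"
    using neighbours_iff[OF G(1)] by blast
  then have "neighbours G u \<subseteq> {v, w}" "neighbours G v \<subseteq> {u, w}"
    using pawfree_triangle_neighbours[OF G(1,2)] uv by (simp_all add: insert_commute)
  then have "degree G u \<le> 2" "degree G v \<le> 2"
    unfolding degree_def by (simp_all add: card_le_2_of_subset_doubleton)
  then show ?thesis
    using G(3) by linarith
qed

lemma pawfree_degree_sum_bounded:
  assumes "simple_graph G" "free T1 G" "card (fst G) = n" "4 \<le> n"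
  shows "degree_sum_bounded G n"
  using assms pawfree_edge_degree_sum[of G] by unfold_locales (auto simp: arcs_def)

theorem corollary3p15:
  shows "\<forall>H \<in> {P3, P4, C4}. \<exists>n0. \<forall>n \<ge> n0. ex n H T1 = count_copies H (T2 n)"
proof
  fix H :: "nat graph" assume H: "H \<in> {P3, P4, C4}"
  show "\<exists>n0. \<forall>n \<ge> n0. ex n H T1 = count_copies H (T2 n)"
  proof (intro exI[of _ 4] allI impI)
    fix n :: nat assume n: "4 \<le> n"
    show "ex n H T1 = count_copies H (T2 n)"
    proof (rule ex_eq_count_copies_T2[OF T2_free_T1])
      fix G :: "nat graph" assume "simple_graph G" "fst G = {0..<n}" "free T1 G"
      then interpret degree_sum_bounded G n
        using n by (intro pawfree_degree_sum_bounded) simp_all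
      show "count_copies H G \<le> count_copies H (T2 n)"
        using H count_copies_P3_le_T2 count_copies_P4_le_T2 count_copies_C4_le_T2 by blast
    qed
  qed
qed

end
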